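(* For integers $n\ge0$ and $k\ge1$, $(-1)^{k+1}D_{-2n-2k}^{(2k-1)}$ equals the number of integer sequences $a_1\le a_2\ge a_3\le a_4\ge\cdots\le a_{2n}$ with $1\le a_i\le k$ for all $i$ (for $n=0$ this number is $1$, counting the empty sequence).
   Context: For $N\ge0$ and $0\le r,s\le K$, $C_N^{(K)}(r\to s)$ is the number of lattice paths with steps $(1,1),(1,-1)$ from $(0,r)$ to $(N,s)$ never below the $x$-axis nor above $y=K$. For odd $K$, $F(x)=\sum_{N\ge0}C_N^{(K)}(r\to s)x^N$ is rational $p/q$ with $\deg p<\deg q$, $q(0)\ne0$, and $C_N^{(K)}(r\to s)$ for negative $N$ is defined by $\sum_{N\ge1}C_{-N}^{(K)}(r\to s)x^N=-F(1/x)$ (equivalently by extending the linear recurrence backwards). For all integers $n$, $D_{2n}^{(K)}:=C_{2n+K}^{(K)}(0\to K)$. *)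

theory Defs
  imports "HOL-Computational_Algebra.Computational_Algebra"
begin

text \<open>Lattice paths with steps (1,1),(1,-1) from (0,r) to (N,s), staying in the strip
  0 \<le> y \<le> K, encoded by their list of heights y_0,...,y_N.\<close>
definition strip_paths :: "nat \<Rightarrow> nat \<Rightarrow> nat \<Rightarrow> nat \<Rightarrow> nat list set" where
  "strip_paths K r s N = {ys. length ys = Suc N \<and> ys ! 0 = r \<and> ys ! N = s \<and>
      (\<forall>y\<in>set ys. y \<le> K) \<and>
      (\<forall>i<N. ys ! Suc i = ys ! i + 1 \<or> ys ! i = ys ! Suc i + 1)}"

definition C_nat :: "nat \<Rightarrow> nat \<Rightarrow> nat \<Rightarrow> nat \<Rightarrow> nat" where
  "C_nat K r s N = card (strip_paths K r s N)"

definition C_gf :: "nat \<Rightarrow> nat \<Rightarrow> nat \<Rightarrow> real fps" where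
  "C_gf K r s = Abs_fps (\<lambda>N. real (C_nat K r s N))"

definition C_pq :: "nat \<Rightarrow> nat \<Rightarrow> nat \<Rightarrow> real poly \<times> real poly" where
  "C_pq K r s = (SOME (p, q). degree p < degree q \<and> coeff q 0 \<noteq> 0 \<and>
       fps_of_poly p / fps_of_poly q = C_gf K r s)"

text \<open>-F(1/x), expanded as a power series in x: with F = p/q,
  F(1/x) = x^(deg q - deg p) * reflect p (x) / reflect q (x).\<close>
definition C_neg_gf :: "nat \<Rightarrow> nat \<Rightarrow> nat \<Rightarrow> real fps" where
  "C_neg_gf K r s = (case C_pq K r s of (p, q) \<Rightarrow>
      - (fps_X ^ (degree q - degree p) * fps_of_poly (reflect_poly p)
          / fps_of_poly (reflect_poly q)))"

definition C_int :: "nat \<Rightarrow> nat \<Rightarrow> nat \<Rightarrow> int \<Rightarrow> real" where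
  "C_int K r s N = (if 0 \<le> N then real (C_nat K r s (nat N))
                    else fps_nth (C_neg_gf K r s) (nat (- N)))"

definition D :: "nat \<Rightarrow> int \<Rightarrow> real" where
  "D K m = C_int K 0 K (m + int K)"

text \<open>Sequences a_1 \<le> a_2 \<ge> a_3 \<le> ... of length 2n with entries in {1..k} (0-indexed list).\<close>
definition alt_seqs :: "nat \<Rightarrow> nat \<Rightarrow> nat list set" where
  "alt_seqs n k = {a. length a = 2 * n \<and> (\<forall>x\<in>set a. 1 \<le> x \<and> x \<le> k) \<and>
      (\<forall>j. Suc j < 2 * n \<longrightarrow>
          (if even j then a ! j \<le> a ! Suc j else a ! j \<ge> a ! Suc j))}"

end

theory Submission
  imports Defs
begin

text \<open>Splitting a path at its last step shows that the generating functions
  F_s = \<Sum>_N C_N(0 \<rightarrow> s) x^N satisfy F_s = [s = 0] + x (F_{s-1} + F_{s+1}); solving this system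
  from the top level K downwards gives Q_{K+1}(x) F_K = x^K, where Q_j(x) = x^j U_j(1/(2x))
  and U_j is the Chebyshev polynomial of the second kind. For K = 2k - 1 the quotient
  x^K / Q_{2k} is a representation F_K = p/q with deg p < deg q, and since the reflection of
  Q_{2k} is U_{2k}(x/2), the series -F_K(1/x) equals -x / U_{2k}(x/2).

  On the other side, sorting the alternating sequences by their first two entries gives a
  three-term recurrence, in the bound b on the first entry, for their generating functions H_b
  in x^2; solving it shows U_{2k}(x/2) H_k = (-1)^k. Hence the coefficient of x^{2n+1} in
  -F_K(1/x), which is D_{-2n-2k}, is (-1)^{k+1} times the number of sequences of length 2n.\<close>

section \<open>Reflection of rational power series\<close>

lemma fps_divide_eq_divide_iff:
  fixes a b c d :: "'a::field fps"
  assumes "b $ 0 \<noteq> 0" "d $ 0 \<noteq> 0"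
  shows "a / b = c / d \<longleftrightarrow> a * d = c * b"
proof -
  have "is_unit b" "is_unit d" using assms by simp_all
  then show ?thesis by (simp add: unit_eq_div1 unit_div_commute unit_eq_div2)
qed

lemma reflected_ratio_eq:
  fixes p q p' q' :: "'a::field poly"
  assumes q: "coeff q 0 \<noteq> 0" and q': "coeff q' 0 \<noteq> 0"
    and ratio: "fps_of_poly p / fps_of_poly q = fps_of_poly p' / fps_of_poly q'"
  shows "fps_X ^ (degree q - degree p) * fps_of_poly (reflect_poly p) / fps_of_poly (reflect_poly q) =
         fps_X ^ (degree q' - degree p') * fps_of_poly (reflect_poly p') / fps_of_poly (reflect_poly q')"
proof -
  have "q \<noteq> 0" "q' \<noteq> 0" using q q' by auto
  have "fps_of_poly (p * q') = fps_of_poly (p' * q)"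
    using ratio q q' by (simp add: fps_divide_eq_divide_iff fps_of_poly_mult)
  then have cross: "p * q' = p' * q"
    by (simp only: fps_of_poly_eq_iff)
  show ?thesis
  proof (cases "p = 0")
    case True
    with cross \<open>q \<noteq> 0\<close> have "p' = 0" by simp
    with True show ?thesis by simp
  next
    case False
    have "p' \<noteq> 0" using cross False \<open>q \<noteq> 0\<close> \<open>q' \<noteq> 0\<close> by auto
    then have "degree p + degree q' = degree p' + degree q"
      using arg_cong[OF cross, of degree] False \<open>q \<noteq> 0\<close> \<open>q' \<noteq> 0\<close> by (simp add: degree_mult_eq)
    then have same_shift: "degree q - degree p = degree q' - degree p'" by linarith
    have "fps_of_poly (reflect_poly p) * fps_of_poly (reflect_poly q') =
        fps_of_poly (reflect_poly p') * fps_of_poly (reflect_poly q)"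
      using cross by (simp flip: fps_of_poly_mult reflect_poly_mult)
    then show ?thesis
      unfolding same_shift using \<open>q \<noteq> 0\<close> \<open>q' \<noteq> 0\<close>
      by (simp add: fps_divide_eq_divide_iff mult.assoc)
  qed
qed

text \<open>C_pq picks its representation by SOME; the value of C_neg_gf does not depend on
  that choice.\<close>

lemma C_neg_gf_eqI:
  assumes "degree p < degree q" "coeff q 0 \<noteq> 0" "fps_of_poly p / fps_of_poly q = C_gf K r s"
  shows "C_neg_gf K r s =
    - (fps_X ^ (degree q - degree p) * fps_of_poly (reflect_poly p) / fps_of_poly (reflect_poly q))"
proof -
  obtain p' q' where pq': "C_pq K r s = (p', q')" by fastforce
  have "degree p' < degree q' \<and> coeff q' 0 \<noteq> 0 \<and> fps_of_poly p' / fps_of_poly q' = C_gf K r s"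
    using someI[of "\<lambda>(p, q). degree p < degree q \<and> coeff q 0 \<noteq> 0 \<and>
        fps_of_poly p / fps_of_poly q = C_gf K r s" "(p, q)"] assms pq'
    unfolding C_pq_def by auto
  then show ?thesis
    using reflected_ratio_eq[of q' q p' p] assms unfolding C_neg_gf_def pq' by simp
qed

lemma poly_eqI_nonzero:
  fixes p q :: "'a::{idom, ring_char_0} poly"
  assumes "\<And>x. x \<noteq> 0 \<Longrightarrow> poly p x = poly q x"
  shows "p = q"
proof (rule ccontr)
  assume "p \<noteq> q"
  then have "finite {x. poly (p - q) x = 0}" by (intro poly_roots_finite) simp
  moreover have "UNIV - {0} \<subseteq> {x. poly (p - q) x = 0}" using assms by auto
  ultimately have "finite (UNIV - {0 :: 'a})" by (rule finite_subset[rotated])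
  then show False by (simp add: infinite_UNIV_char_0)
qed

lemma reflect_poly_monom: "reflect_poly (monom c n) = [:c:]"
  by (cases "c = 0")
    (auto intro!: poly_eqI simp: coeff_reflect_poly coeff_monom degree_monom_eq coeff_pCons split: nat.split)

section \<open>Chebyshev polynomials\<close>

text \<open>cheb_U j is U_j(x/2) for the Chebyshev polynomial U_j of the second kind, and
  cheb_U_rev j is x^j U_j(1/(2x)), see poly_cheb_U_rev_inverse.\<close>

fun cheb_U_rev :: "nat \<Rightarrow> real poly" where
  "cheb_U_rev 0 = 1"
| "cheb_U_rev (Suc 0) = 1"
| "cheb_U_rev (Suc (Suc j)) = cheb_U_rev (Suc j) - monom 1 2 * cheb_U_rev j"

fun cheb_U :: "nat \<Rightarrow> real poly" where
  "cheb_U 0 = 1"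
| "cheb_U (Suc 0) = [:0, 1:]"
| "cheb_U (Suc (Suc j)) = [:0, 1:] * cheb_U (Suc j) - cheb_U j"

lemma fps_of_poly_cheb_U_rev_Suc_Suc:
  "fps_of_poly (cheb_U_rev (Suc (Suc j))) =
     fps_of_poly (cheb_U_rev (Suc j)) - fps_X ^ 2 * fps_of_poly (cheb_U_rev j)"
  by (simp add: fps_of_poly_diff fps_of_poly_mult fps_of_poly_monom')

lemma degree_cheb_U_rev_le: "degree (cheb_U_rev j) \<le> j"
proof (induction j rule: cheb_U_rev.induct)
  case (3 j)
  have "degree (monom (1::real) 2 * cheb_U_rev j) \<le> 2 + degree (cheb_U_rev j)"
    using degree_mult_le[of "monom 1 2" "cheb_U_rev j"] by (simp add: degree_monom_eq)
  with "3.IH" show ?case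
    by (simp add: degree_diff_le)
qed simp_all

lemma coeff_cheb_U_rev_0: "coeff (cheb_U_rev j) 0 = 1"
  by (induction j rule: cheb_U_rev.induct) (simp_all add: coeff_monom_mult coeff_mult)

lemma coeff_cheb_U_rev_top:
  "coeff (cheb_U_rev j) j = (if even j then (-1) ^ (j div 2) else 0)"
proof (induction j rule: cheb_U_rev.induct)
  case (3 j)
  have "coeff (cheb_U_rev (Suc j)) (Suc (Suc j)) = 0"
    using degree_cheb_U_rev_le[of "Suc j"] by (intro coeff_eq_0) simp
  moreover have "coeff (monom 1 2 * cheb_U_rev j) (Suc (Suc j)) = coeff (cheb_U_rev j) j"
    by (simp add: coeff_monom_mult)
  ultimately show ?case
    using "3.IH" by simp
qed simp_all

lemma degree_cheb_U_rev_even: "degree (cheb_U_rev (2 * j)) = 2 * j"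
  using degree_cheb_U_rev_le[of "2 * j"] le_degree[of "cheb_U_rev (2 * j)" "2 * j"]
  by (simp add: coeff_cheb_U_rev_top)

lemma poly_cheb_U_rev_inverse:
  assumes "x \<noteq> 0"
  shows "x ^ j * poly (cheb_U_rev j) (inverse x) = poly (cheb_U j) x"
proof (induction j rule: cheb_U_rev.induct)
  case 2
  show ?case using assms by simp
next
  case (3 j)
  have "x ^ Suc (Suc j) * poly (cheb_U_rev (Suc (Suc j))) (inverse x) =
      x * (x ^ Suc j * poly (cheb_U_rev (Suc j)) (inverse x))
      - (x * inverse x) ^ 2 * (x ^ j * poly (cheb_U_rev j) (inverse x))"
    by (simp add: poly_monom algebra_simps power2_eq_square)
  with "3.IH" assms show ?case by simp
qed simp

lemma reflect_cheb_U_rev_even: "reflect_poly (cheb_U_rev (2 * j)) = cheb_U (2 * j)"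
  by (rule poly_eqI_nonzero)
    (simp add: poly_reflect_poly_nz degree_cheb_U_rev_even poly_cheb_U_rev_inverse)

lemma cheb_U_Suc4:
  "cheb_U (Suc (Suc (Suc (Suc j)))) = ([:0, 1:] ^ 2 - 2) * cheb_U (Suc (Suc j)) - cheb_U j"
  by (simp add: algebra_simps power2_eq_square)

lemma fps_of_poly_cheb_U_Suc4:
  "fps_of_poly (cheb_U (Suc (Suc (Suc (Suc j))))) =
     (fps_X ^ 2 - 2) * fps_of_poly (cheb_U (Suc (Suc j))) - fps_of_poly (cheb_U j)"
  unfolding cheb_U_Suc4 by (simp add: fps_of_poly_diff fps_of_poly_mult fps_of_poly_power)

section \<open>Lattice paths in a strip\<close>

lemma strip_paths_finite: "finite (strip_paths K r s N)"
proof (rule finite_subset)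
  show "strip_paths K r s N \<subseteq> {ys. set ys \<subseteq> {0..K} \<and> length ys = Suc N}"
    unfolding strip_paths_def by auto
qed (rule finite_lists_length_eq, simp)

lemma strip_paths_endpoint_le:
  assumes "ys \<in> strip_paths K r s N"
  shows "s \<le> K"
proof -
  from assms have "length ys = Suc N" "ys ! N = s" "\<forall>y\<in>set ys. y \<le> K"
    by (simp_all add: strip_paths_def)
  then show ?thesis by (metis lessI nth_mem)
qed

lemma strip_paths_0: "strip_paths K r s 0 = (if r = s \<and> s \<le> K then {[s]} else {})"
  unfolding strip_paths_def by (auto simp: length_Suc_conv)

lemma snoc_in_strip_paths_iff:
  "ys @ [s] \<in> strip_paths K r s (Suc N) \<longleftrightarrow>
     (\<exists>s'. ys \<in> strip_paths K r s' N \<and> s \<le> K \<and> (s = s' + 1 \<or> s' = s + 1))"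
proof
  assume path: "ys @ [s] \<in> strip_paths K r s (Suc N)"
  then have "length ys = Suc N" by (simp add: strip_paths_def)
  with path show "\<exists>s'. ys \<in> strip_paths K r s' N \<and> s \<le> K \<and> (s = s' + 1 \<or> s' = s + 1)"
    unfolding strip_paths_def
    by (auto simp: nth_append less_Suc_eq intro!: exI[of _ "ys ! N"] split: if_splits)
next
  assume "\<exists>s'. ys \<in> strip_paths K r s' N \<and> s \<le> K \<and> (s = s' + 1 \<or> s' = s + 1)"
  then show "ys @ [s] \<in> strip_paths K r s (Suc N)"
    unfolding strip_paths_def
    by (auto simp: nth_append less_Suc_eq)
qed

lemma strip_paths_Suc:
  assumes "s \<le> K"
  shows "strip_paths K r s (Suc N) = (\<lambda>ys. ys @ [s]) `
    ((if 0 < s then strip_paths K r (s - 1) N else {}) \<union> (if s < K then strip_paths K r (s + 1) N else {}))"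
    (is "?lhs = _ ` ?prev")
proof -
  have split_last: "zs = butlast zs @ [s]" if "zs \<in> ?lhs" for zs
    using that append_butlast_last_id[of zs] last_conv_nth[of zs]
    by (force simp: strip_paths_def)
  have snoc_iff: "ys @ [s] \<in> ?lhs \<longleftrightarrow> ys \<in> ?prev" for ys
  proof
    assume "ys @ [s] \<in> ?lhs"
    then obtain s' where ys: "ys \<in> strip_paths K r s' N" and "s = s' + 1 \<or> s' = s + 1"
      unfolding snoc_in_strip_paths_iff by blast
    then consider "s' = s - 1" "0 < s" | "s' = s + 1" "s < K"
      using strip_paths_endpoint_le[OF ys] by linarith
    then show "ys \<in> ?prev"
      by cases (use ys in auto)
  next
    assume "ys \<in> ?prev"
    then show "ys @ [s] \<in> ?lhs"
      unfolding snoc_in_strip_paths_iff using assms by (auto split: if_splits)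
  qed
  show ?thesis
  proof (intro equalityI subsetI)
    fix zs assume zs: "zs \<in> ?lhs"
    then have "butlast zs \<in> ?prev"
      using snoc_iff[of "butlast zs"] split_last[OF zs] by simp
    with split_last[OF zs] show "zs \<in> (\<lambda>ys. ys @ [s]) ` ?prev"
      by (rule image_eqI)
  next
    fix zs assume "zs \<in> (\<lambda>ys. ys @ [s]) ` ?prev"
    then obtain ys where "zs = ys @ [s]" "ys \<in> ?prev" by blast
    with snoc_iff show "zs \<in> ?lhs" by simp
  qed
qed

lemma C_nat_Suc:
  assumes "s \<le> K"
  shows "C_nat K r s (Suc N) =
    (if 0 < s then C_nat K r (s - 1) N else 0) + (if s < K then C_nat K r (s + 1) N else 0)"
proof -
  have disjoint: "strip_paths K r (s - 1) N \<inter> strip_paths K r (s + 1) N = {}"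
    by (auto simp: strip_paths_def)
  have "inj (\<lambda>ys. ys @ [s])" by (auto intro: injI)
  then show ?thesis
    unfolding C_nat_def strip_paths_Suc[OF assms]
    using disjoint by (simp add: card_image inj_on_subset card_Un_disjoint strip_paths_finite)
qed

lemma C_gf_rec:
  assumes "s \<le> K"
  shows "C_gf K r s = (if s = r then 1 else 0) +
    fps_X * ((if 0 < s then C_gf K r (s - 1) else 0) + (if s < K then C_gf K r (s + 1) else 0))"
proof (rule fps_ext)
  fix N show "C_gf K r s $ N = ((if s = r then 1 else 0) +
    fps_X * ((if 0 < s then C_gf K r (s - 1) else 0) + (if s < K then C_gf K r (s + 1) else 0))) $ N"
    using assms by (cases N) (auto simp: C_gf_def C_nat_def strip_paths_0 C_nat_Suc[unfolded C_nat_def])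
qed

lemma C_gf_descent:
  assumes "j \<le> K"
  shows "fps_X ^ j * C_gf K 0 (K - j) = fps_of_poly (cheb_U_rev j) * C_gf K 0 K"
  using assms
proof (induction j rule: cheb_U_rev.induct)
  case 1
  show ?case by simp
next
  case 2
  then show ?case using C_gf_rec[of K K 0] by simp
next
  case (3 j)
  have mid: "C_gf K 0 (K - Suc j) = fps_X * (C_gf K 0 (K - Suc (Suc j)) + C_gf K 0 (K - j))"
    using C_gf_rec[of "K - Suc j" K 0] "3.prems" by (simp add: Suc_diff_Suc)
  have "fps_X ^ Suc (Suc j) * C_gf K 0 (K - Suc (Suc j)) =
      fps_X ^ Suc j * C_gf K 0 (K - Suc j) - fps_X ^ 2 * (fps_X ^ j * C_gf K 0 (K - j))"
    unfolding mid by (simp add: algebra_simps power2_eq_square)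
  also have "\<dots> = fps_of_poly (cheb_U_rev (Suc (Suc j))) * C_gf K 0 K"
    unfolding fps_of_poly_cheb_U_rev_Suc_Suc using "3.IH" "3.prems" by (simp add: algebra_simps)
  finally show ?case .
qed

lemma C_gf_top_closed_form:
  "fps_of_poly (cheb_U_rev (Suc K)) * C_gf K 0 K = fps_X ^ K"
proof (cases K)
  case 0
  then show ?thesis using C_gf_rec[of 0 0 0] by simp
next
  case (Suc m)
  have "fps_X ^ K = fps_X ^ K * C_gf K 0 (K - K) - fps_X ^ 2 * (fps_X ^ m * C_gf K 0 (K - m))"
    using C_gf_rec[of 0 K 0] Suc by (simp add: algebra_simps power2_eq_square)
  also have "\<dots> = fps_of_poly (cheb_U_rev (Suc K)) * C_gf K 0 K"
    unfolding Suc fps_of_poly_cheb_U_rev_Suc_Suc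
    using C_gf_descent[of "Suc m" "Suc m"] C_gf_descent[of m "Suc m"] by (simp add: algebra_simps)
  finally show ?thesis by simp
qed

section \<open>Alternating sequences\<close>

lemma alt_seqs_finite: "finite (alt_seqs n k)"
proof (rule finite_subset)
  show "alt_seqs n k \<subseteq> {a. set a \<subseteq> {0..k} \<and> length a = 2 * n}"
    unfolding alt_seqs_def by auto
qed (rule finite_lists_length_eq, simp)

lemma alt_seqs_Suc_is_Cons_Cons:
  assumes "a \<in> alt_seqs (Suc n) k"
  obtains c d r where "a = c # d # r"
proof -
  from assms have "length a = Suc (Suc (2 * n))" by (simp add: alt_seqs_def)
  then show ?thesis using that by (auto simp: length_Suc_conv)
qed

definition zigzag :: "nat list \<Rightarrow> nat \<Rightarrow> bool" where
  "zigzag xs m \<longleftrightarrow> (\<forall>j. Suc j < m \<longrightarrow>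
      (if even j then xs ! j \<le> xs ! Suc j else xs ! Suc j \<le> xs ! j))"

lemma alt_seqs_iff_zigzag:
  "xs \<in> alt_seqs n k \<longleftrightarrow>
     length xs = 2 * n \<and> (\<forall>x\<in>set xs. 1 \<le> x \<and> x \<le> k) \<and> zigzag xs (2 * n)"
  by (simp add: alt_seqs_def zigzag_def)

lemma zigzag_Cons_Cons:
  assumes "length r = 2 * n"
  shows "zigzag (c # d # r) (2 * Suc n) \<longleftrightarrow> c \<le> d \<and> (r = [] \<or> hd r \<le> d) \<and> zigzag r (2 * n)"
    (is "zigzag ?a _ \<longleftrightarrow> _")
proof
  assume za: "zigzag ?a (2 * Suc n)"
  have "r = [] \<or> hd r \<le> d"
  proof (cases r)
    case (Cons x xs)
    with assms have "Suc 1 < 2 * Suc n" by auto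
    with za[unfolded zigzag_def, THEN spec, of 1] Cons show ?thesis by simp
  qed simp
  moreover have "zigzag r (2 * n)"
    unfolding zigzag_def
  proof (intro allI impI)
    fix j assume "Suc j < 2 * n"
    with za[unfolded zigzag_def, THEN spec, of "Suc (Suc j)"]
    show "if even j then r ! j \<le> r ! Suc j else r ! Suc j \<le> r ! j"
      by (simp split: if_splits)
  qed
  moreover have "c \<le> d" using za[unfolded zigzag_def, THEN spec, of 0] by simp
  ultimately show "c \<le> d \<and> (r = [] \<or> hd r \<le> d) \<and> zigzag r (2 * n)" by blast
next
  assume asm: "c \<le> d \<and> (r = [] \<or> hd r \<le> d) \<and> zigzag r (2 * n)"
  show "zigzag ?a (2 * Suc n)"
    unfolding zigzag_def
  proof (intro allI impI)
    fix j assume j: "Suc j < 2 * Suc n"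
    consider "j = 0" | "j = 1" | i where "j = Suc (Suc i)"
      by (metis One_nat_def not0_implies_Suc)
    then show "if even j then ?a ! j \<le> ?a ! Suc j else ?a ! Suc j \<le> ?a ! j"
    proof cases
      case 1
      with asm show ?thesis by simp
    next
      case 2
      with j assms have "r \<noteq> []" by auto
      with 2 asm show ?thesis by (simp add: hd_conv_nth)
    next
      case 3
      with j asm show ?thesis unfolding zigzag_def by simp
    qed
  qed
qed

lemma Cons_Cons_in_alt_seqs_iff:
  "c # d # r \<in> alt_seqs (Suc n) k \<longleftrightarrow>
     1 \<le> c \<and> c \<le> d \<and> d \<le> k \<and> r \<in> alt_seqs n k \<and> (r = [] \<or> hd r \<le> d)"
  unfolding alt_seqs_iff_zigzag using zigzag_Cons_Cons[of r n c d] by auto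

definition alt_seqs_head_le :: "nat \<Rightarrow> nat \<Rightarrow> nat \<Rightarrow> nat list set" where
  "alt_seqs_head_le n k b = {a \<in> alt_seqs n k. a = [] \<or> hd a \<le> b}"

lemma alt_seqs_head_le_0: "alt_seqs_head_le 0 k b = {[]}"
  by (auto simp: alt_seqs_head_le_def alt_seqs_def)

lemma alt_seqs_head_le_top: "alt_seqs_head_le n k k = alt_seqs n k"
proof -
  have "hd a \<le> k" if "a \<in> alt_seqs n k" "a \<noteq> []" for a
    using that hd_in_set[of a] by (auto simp: alt_seqs_def)
  then show ?thesis by (auto simp: alt_seqs_head_le_def)
qed

lemma alt_seqs_head_le_Suc:
  "alt_seqs_head_le (Suc n) k b =
     (\<Union>c\<in>{1..b}. \<Union>d\<in>{c..k}. (\<lambda>r. c # d # r) ` alt_seqs_head_le n k d)"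
proof (intro equalityI subsetI)
  fix a assume a: "a \<in> alt_seqs_head_le (Suc n) k b"
  then obtain c d r where a_eq: "a = c # d # r"
    by (auto simp: alt_seqs_head_le_def elim: alt_seqs_Suc_is_Cons_Cons)
  with a have "c \<in> {1..b}" "d \<in> {c..k}" "r \<in> alt_seqs_head_le n k d"
    by (auto simp: alt_seqs_head_le_def Cons_Cons_in_alt_seqs_iff)
  with a_eq show "a \<in> (\<Union>c\<in>{1..b}. \<Union>d\<in>{c..k}. (\<lambda>r. c # d # r) ` alt_seqs_head_le n k d)"
    by blast
qed (auto simp: alt_seqs_head_le_def Cons_Cons_in_alt_seqs_iff)

lemma card_alt_seqs_head_le_Suc:
  "card (alt_seqs_head_le (Suc n) k b) =
     (\<Sum>c\<in>{1..b}. \<Sum>d\<in>{c..k}. card (alt_seqs_head_le n k d))"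
proof -
  have fin: "finite (alt_seqs_head_le n k d)" for d
    using alt_seqs_finite by (simp add: alt_seqs_head_le_def)
  have "card (alt_seqs_head_le (Suc n) k b) =
      (\<Sum>c\<in>{1..b}. card (\<Union>d\<in>{c..k}. (\<lambda>r. c # d # r) ` alt_seqs_head_le n k d))"
    unfolding alt_seqs_head_le_Suc by (rule card_UN_disjoint) (auto simp: fin)
  also have "\<dots> = (\<Sum>c\<in>{1..b}. \<Sum>d\<in>{c..k}. card ((\<lambda>r. c # d # r) ` alt_seqs_head_le n k d))"
    by (intro sum.cong refl card_UN_disjoint) (auto simp: fin)
  also have "\<dots> = (\<Sum>c\<in>{1..b}. \<Sum>d\<in>{c..k}. card (alt_seqs_head_le n k d))"
    by (intro sum.cong refl card_image) (auto simp: inj_on_def)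
  finally show ?thesis .
qed

lemma card_alt_seqs_head_le_Suc_Suc:
  "card (alt_seqs_head_le (Suc n) k (Suc j)) =
     card (alt_seqs_head_le (Suc n) k j) + (\<Sum>d\<in>{Suc j..k}. card (alt_seqs_head_le n k d))"
  unfolding card_alt_seqs_head_le_Suc by (simp add: sum.cl_ivl_Suc)

definition alt_gf :: "nat \<Rightarrow> nat \<Rightarrow> real fps" where
  "alt_gf k b = Abs_fps (\<lambda>m. if even m then real (card (alt_seqs_head_le (m div 2) k b)) else 0)"

lemma alt_gf_0: "alt_gf k 0 = 1"
proof (rule fps_ext)
  fix m
  have "card (alt_seqs_head_le (Suc n) k 0) = 0" for n
    by (simp add: card_alt_seqs_head_le_Suc)
  then show "alt_gf k 0 $ m = 1 $ m"
    by (cases "m div 2") (auto simp: alt_gf_def alt_seqs_head_le_0 elim: evenE)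
qed

lemma alt_gf_Suc:
  "alt_gf k (Suc j) = alt_gf k j + fps_X ^ 2 * (\<Sum>d\<in>{Suc j..k}. alt_gf k d)"
proof (rule fps_ext)
  fix m
  show "alt_gf k (Suc j) $ m = (alt_gf k j + fps_X ^ 2 * (\<Sum>d\<in>{Suc j..k}. alt_gf k d)) $ m"
  proof (cases "m < 2")
    case True
    then show ?thesis
      by (auto simp: alt_gf_def alt_seqs_head_le_0 fps_X_power_mult_nth less_2_cases_iff)
  next
    case False
    then obtain i where m: "m = Suc (Suc i)"
      by (metis One_nat_def less_2_cases_iff not0_implies_Suc)
    then have "m div 2 = Suc (i div 2)" "even m \<longleftrightarrow> even i" by simp_all
    then show ?thesis
      unfolding m by (auto simp: alt_gf_def fps_X_power_mult_nth fps_sum_nth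
          card_alt_seqs_head_le_Suc_Suc of_nat_sum)
  qed
qed

lemma alt_gf_Suc_Suc:
  assumes "j < k"
  shows "alt_gf k (Suc (Suc j)) = (2 - fps_X ^ 2) * alt_gf k (Suc j) - alt_gf k j"
proof -
  have "(\<Sum>d\<in>{Suc j..k}. alt_gf k d) = alt_gf k (Suc j) + (\<Sum>d\<in>{Suc (Suc j)..k}. alt_gf k d)"
    using assms by (subst sum.atLeast_Suc_atMost) auto
  with alt_gf_Suc[of k j] alt_gf_Suc[of k "Suc j"] show ?thesis
    by (simp add: algebra_simps)
qed

lemma alt_gf_descent:
  assumes "m \<le> k"
  shows "alt_gf k (k - m) = (-1) ^ m * fps_of_poly (cheb_U (2 * m)) * alt_gf k k"
  using assms
proof (induction m rule: induct_nat_012)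
  case 0
  show ?case by simp
next
  case 1
  then have top: "alt_gf k k = alt_gf k (k - 1) + fps_X ^ 2 * alt_gf k k"
    using alt_gf_Suc[of k "k - 1"] by simp
  have "cheb_U (2 * Suc 0) = [:0, 1:] * [:0, 1:] - 1"
    by (simp add: numeral_2_eq_2)
  then have cheb_U_2: "fps_of_poly (cheb_U (2 * Suc 0)) = fps_X ^ 2 - 1"
    by (simp add: fps_of_poly_diff fps_of_poly_mult power2_eq_square)
  show ?case
    unfolding cheb_U_2 using top by (simp add: algebra_simps)
next
  case (ge2 m)
  have index: "2 * Suc (Suc m) = Suc (Suc (Suc (Suc (2 * m))))" "2 * Suc m = Suc (Suc (2 * m))"
    by simp_all
  have "alt_gf k (k - m) =
      (2 - fps_X ^ 2) * alt_gf k (k - Suc m) - alt_gf k (k - Suc (Suc m))"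
    using alt_gf_Suc_Suc[of "k - Suc (Suc m)" k] ge2.prems by (simp add: Suc_diff_Suc)
  then have "alt_gf k (k - Suc (Suc m)) =
      (2 - fps_X ^ 2) * alt_gf k (k - Suc m) - alt_gf k (k - m)"
    by (simp add: algebra_simps)
  also have "\<dots> = (-1) ^ m * ((fps_X ^ 2 - 2) * fps_of_poly (cheb_U (2 * Suc m))
      - fps_of_poly (cheb_U (2 * m))) * alt_gf k k"
    using ge2 by (simp add: algebra_simps)
  also have "\<dots> = (-1) ^ Suc (Suc m) * fps_of_poly (cheb_U (2 * Suc (Suc m))) * alt_gf k k"
    unfolding index fps_of_poly_cheb_U_Suc4 by simp
  finally show ?case .
qed

lemma alt_gf_closed_form: "fps_of_poly (cheb_U (2 * k)) * alt_gf k k = (-1) ^ k"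
proof -
  have "fps_of_poly (cheb_U (2 * k)) * alt_gf k k =
      (-1) ^ k * ((-1) ^ k * fps_of_poly (cheb_U (2 * k)) * alt_gf k k)"
    by (simp flip: mult.assoc power_mult_distrib)
  also have "\<dots> = (-1) ^ k"
    using alt_gf_descent[of k k] by (simp add: alt_gf_0)
  finally show ?thesis .
qed

section \<open>The negative-index values\<close>

lemma C_neg_gf_top_odd:
  assumes "1 \<le> k"
  shows "C_neg_gf (2 * k - 1) 0 (2 * k - 1) = - (fps_X * (-1) ^ k * alt_gf k k)"
proof -
  define K where "K = 2 * k - 1"
  have Suc_K: "Suc K = 2 * k" and shift: "2 * k - K = 1" using assms by (simp_all add: K_def)
  let ?Q = "cheb_U_rev (2 * k)" and ?U = "fps_of_poly (cheb_U (2 * k))"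
  have "?Q \<noteq> 0" using coeff_cheb_U_rev_0[of "2 * k"] by auto
  then have U_unit: "?U $ 0 \<noteq> 0" by (simp flip: reflect_cheb_U_rev_even)
  have inverse_U: "inverse ?U = (-1) ^ k * alt_gf k k"
    by (rule fps_inverse_unique)
      (simp add: mult.left_commute[of ?U] alt_gf_closed_form flip: power_mult_distrib)
  have "fps_of_poly (monom 1 K) / fps_of_poly ?Q = C_gf K 0 K"
    using C_gf_top_closed_form[of K] coeff_cheb_U_rev_0[of "2 * k"] unfolding Suc_K
    by (simp add: fps_of_poly_monom' fps_divide_eq_divide_iff[of _ 1, simplified] mult.commute)
  then have "C_neg_gf K 0 K = - (fps_X / ?U)"
    using C_neg_gf_eqI[of "monom 1 K" ?Q K 0 K] Suc_K
    by (simp add: shift degree_monom_eq degree_cheb_U_rev_even coeff_cheb_U_rev_0 reflect_cheb_U_rev_even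
        reflect_poly_monom)
  also have "\<dots> = - (fps_X * inverse ?U)"
    using U_unit by (simp add: fps_divide_unit)
  finally show ?thesis
    unfolding inverse_U by (simp add: K_def mult.assoc)
qed

lemma fps_neg_one_power: "(-1) ^ k = fps_const ((-1) ^ k :: 'a::comm_ring_1)"
  by (metis fps_const_1_eq_1 fps_const_neg fps_const_power)

theorem corollary14:
  fixes n k :: nat
  assumes "k \<ge> 1"
  shows "(-1) ^ (k + 1) * D (2 * k - 1) (- 2 * int n - 2 * int k) = real (card (alt_seqs n k))"
proof -
  have index: "- 2 * int n - 2 * int k + int (2 * k - 1) = - int (Suc (2 * n))"
    using assms by simp
  have coeff_index: "nat (- (- int (Suc (2 * n)))) = Suc (2 * n)"
    by simp
  have "D (2 * k - 1) (- 2 * int n - 2 * int k) = C_neg_gf (2 * k - 1) 0 (2 * k - 1) $ Suc (2 * n)"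
    unfolding D_def C_int_def index by (simp only: coeff_index) simp
  also have "\<dots> = - ((-1) ^ k * real (card (alt_seqs n k)))"
    unfolding C_neg_gf_top_odd[OF assms] fps_neg_one_power
    by (simp add: mult.assoc alt_gf_def alt_seqs_head_le_top)
  finally show ?thesis by simp
qed

end
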